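(* The language $P^*_n=\{w \in \{1,\dots,n\}^* : |w|_a \geq 1 \text{ for all } a \in \{1,\dots,n\}\}$ requires regular expressions of length at least $\mathrm{rpn}(P^*_n) \geq \Omega\big(4^n n^{- (3+\log n)/4}\big)$.
   Context: $|w|_a$ is the number of occurrences of letter $a$ in $w$. Regular expressions are built from $\epsilon$ and letters by union, concatenation and star (no $\emptyset$); $\mathrm{rpn}(L)$ is the minimum number of syntax-tree nodes of an expression describing $L$. Logarithms are base 2. *)

theory Defs
  imports Complex_Main
begin

datatype 'a rexp = Eps | Atom 'a | Plus "'a rexp" "'a rexp" | Times "'a rexp" "'a rexp" | Star "'a rexp"

definition conc :: "'a list set \<Rightarrow> 'a list set \<Rightarrow> 'a list set" where
  "conc A B = {u @ v | u v. u \<in> A \<and> v \<in> B}"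

inductive_set star :: "'a list set \<Rightarrow> 'a list set" for A where
  star_Nil: "[] \<in> star A"
| star_app: "u \<in> A \<Longrightarrow> v \<in> star A \<Longrightarrow> u @ v \<in> star A"

fun lang :: "'a rexp \<Rightarrow> 'a list set" where
  "lang Eps = {[]}"
| "lang (Atom a) = {[a]}"
| "lang (Plus r s) = lang r \<union> lang s"
| "lang (Times r s) = conc (lang r) (lang s)"
| "lang (Star r) = star (lang r)"

fun rsize :: "'a rexp \<Rightarrow> nat" where
  "rsize Eps = 1"
| "rsize (Atom a) = 1"
| "rsize (Plus r s) = rsize r + rsize s + 1"
| "rsize (Times r s) = rsize r + rsize s + 1"
| "rsize (Star r) = rsize r + 1"

fun atoms :: "'a rexp \<Rightarrow> 'a set" where
  "atoms Eps = {}"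
| "atoms (Atom a) = {a}"
| "atoms (Plus r s) = atoms r \<union> atoms s"
| "atoms (Times r s) = atoms r \<union> atoms s"
| "atoms (Star r) = atoms r"

definition rpn :: "'a set \<Rightarrow> 'a list set \<Rightarrow> nat" where
  "rpn \<Sigma> L = (LEAST k. \<exists>r. atoms r \<subseteq> \<Sigma> \<and> lang r = L \<and> rsize r = k)"

definition occ :: "'a list \<Rightarrow> 'a \<Rightarrow> nat" where
  "occ w a = length (filter (\<lambda>x. x = a) w)"

definition Pn :: "nat \<Rightarrow> nat list set" where
  "Pn n = {w. set w \<subseteq> {1..n} \<and> (\<forall>a\<in>{1..n}. occ w a \<ge> 1)}"

end

theory Submission
  imports Defs "HOL-Combinatorics.Multiset_Permutations" "HOL-Library.Sublist" "HOL-Real_Asymp.Real_Asymp"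
begin

text \<open>
  Every expression for \<open>Pn n\<close> has the \<open>n!\<close> permutations of \<open>{1..n}\<close>
  as its shortest words. Suppose the shortest words of \<open>r\<close> are permutations of a set
  \<open>A\<close> of size \<open>l\<close>. A union splits them between its summands; for a concatenation
  they are products of permutations of some \<open>B \<subseteq> A\<close> and of \<open>A - B\<close>, so there
  are at most \<open>|B|! (l - |B|)! = l! / (l choose |B|)\<close> of them. Hence, by induction on
  \<open>r\<close>, its size is at least \<open>#shortest words / l! * g l\<close> for every \<open>g \<ge> 0\<close>
  with \<open>g 0, g 1 \<le> 1\<close> and \<open>g l \<le> (l choose k) * (g k + g (l - k) + 1)\<close>.

  With \<open>q = quasipoly\<close>, i.e. \<open>q x = x powr ((3 + log 2 x) / 4)\<close>, the function
  \<open>g l = c * 4 ^ l / q l\<close> satisfies this recurrence as soon as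
  \<open>4 ^ k * q (l - k) \<le> (l choose k) * q l\<close> for large \<open>l\<close> and \<open>k \<le> l / 2\<close>.
  At \<open>k = l / 2\<close> this is the central binomial bound \<open>4 ^ m \<le> 2 * sqrt m * (2 m choose m)\<close>,
  since the exponent of \<open>q\<close> is chosen so that \<open>q (2 m) = 2 * sqrt m * q m\<close>.
  It propagates down to \<open>k \<ge> l / 4\<close> because \<open>q (j + 1) \<le> 4/3 * q j\<close> for large
  \<open>j\<close>, while consecutive binomial coefficients differ by the factor
  \<open>(l - k) / (k + 1) \<le> 3\<close>; for smaller \<open>k\<close> already \<open>(l choose k) \<ge> (l / k) ^ k \<ge> 4 ^ k\<close>.
\<close>

lemma concI: "u \<in> A \<Longrightarrow> v \<in> B \<Longrightarrow> u @ v \<in> conc A B"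
  unfolding conc_def by blast

lemma card_conc_le:
  assumes "finite A" "finite B"
  shows "card (conc A B) \<le> card A * card B"
proof -
  have "conc A B = (\<lambda>(u, v). u @ v) ` (A \<times> B)"
    unfolding conc_def by auto
  then show ?thesis
    using card_image_le[of "A \<times> B" "\<lambda>(u, v). u @ v"] assms by (simp add: card_cartesian_product)
qed

section \<open>Expressions for the words using exactly a given set of letters\<close>

definition expressible :: "'a set \<Rightarrow> 'a list set \<Rightarrow> bool" where
  "expressible \<Sigma> L \<longleftrightarrow> (\<exists>r. atoms r \<subseteq> \<Sigma> \<and> lang r = L)"

lemma rpn_attained:
  assumes "expressible \<Sigma> L"
  obtains r where "atoms r \<subseteq> \<Sigma>" "lang r = L" "rsize r = rpn \<Sigma> L"
  using LeastI_ex[of "\<lambda>k. \<exists>r. atoms r \<subseteq> \<Sigma> \<and> lang r = L \<and> rsize r = k"] assms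
  unfolding rpn_def expressible_def by blast

lemma expressible_Union:
  assumes "finite I" "I \<noteq> {}" "\<And>i. i \<in> I \<Longrightarrow> expressible \<Sigma> (L i)"
  shows "expressible \<Sigma> (\<Union>i\<in>I. L i)"
  using assms
proof (induction I rule: finite_ne_induct)
  case (singleton i)
  then show ?case by simp
next
  case (insert i I)
  obtain r where "atoms r \<subseteq> \<Sigma>" "lang r = L i"
    using insert.prems unfolding expressible_def by blast
  moreover obtain s where "atoms s \<subseteq> \<Sigma>" "lang s = (\<Union>i\<in>I. L i)"
    using insert.IH insert.prems unfolding expressible_def by blast
  ultimately show ?case
    unfolding expressible_def by (intro exI[of _ "Plus r s"]) simp
qed

lemma star_singletons_eq: "star (insert [] ((\<lambda>a. [a]) ` A)) = {w. set w \<subseteq> A}"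
proof (intro equalityI subsetI)
  fix w assume "w \<in> star (insert [] ((\<lambda>a. [a]) ` A))"
  then show "w \<in> {w. set w \<subseteq> A}" by (induction rule: star.induct) auto
next
  fix w assume "w \<in> {w. set w \<subseteq> A}"
  then have "set w \<subseteq> A" by simp
  then show "w \<in> star (insert [] ((\<lambda>a. [a]) ` A))"
  proof (induction w)
    case Nil
    show ?case by (rule star.star_Nil)
  next
    case (Cons a w)
    then have "[a] @ w \<in> star (insert [] ((\<lambda>a. [a]) ` A))"
      by (intro star.star_app) auto
    then show ?case by simp
  qed
qed

lemma expressible_lists:
  assumes "finite A"
  shows "expressible A {w. set w \<subseteq> A}"
proof -
  have "\<exists>r. atoms r \<subseteq> A \<and> lang r = insert [] ((\<lambda>a. [a]) ` A)"
    using assms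
  proof (induction A rule: finite_induct)
    case empty
    show ?case by (intro exI[of _ Eps]) simp
  next
    case (insert a A)
    then obtain r where "atoms r \<subseteq> A" "lang r = insert [] ((\<lambda>a. [a]) ` A)" by blast
    then show ?case by (intro exI[of _ "Plus (Atom a) r"]) auto
  qed
  then obtain r where "atoms r \<subseteq> A" "lang r = insert [] ((\<lambda>a. [a]) ` A)" by blast
  then show ?thesis
    unfolding expressible_def by (intro exI[of _ "Star r"]) (simp add: star_singletons_eq)
qed

lemma expressible_supseqs:
  assumes "finite A" "set p \<subseteq> A"
  shows "expressible A {w. set w \<subseteq> A \<and> subseq p w}"
  using assms(2)
proof (induction p)
  case Nil
  then show ?case using expressible_lists[OF assms(1)] by simp
next
  case (Cons a p)
  then obtain r s where r: "atoms r \<subseteq> A" "lang r = {w. set w \<subseteq> A}"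
    and s: "atoms s \<subseteq> A" "lang s = {w. set w \<subseteq> A \<and> subseq p w}"
    using expressible_lists[OF assms(1)] unfolding expressible_def by auto
  have "{w. set w \<subseteq> A \<and> subseq (a # p) w} = conc (lang r) (conc {[a]} (lang s))"
  proof (intro equalityI subsetI)
    fix w assume "w \<in> {w. set w \<subseteq> A \<and> subseq (a # p) w}"
    then obtain u v where w: "w = u @ [a] @ v" and "subseq p v" "set w \<subseteq> A"
      using list_emb_ConsD[of "(=)" a p w] by auto
    then have "u \<in> lang r" "v \<in> lang s" unfolding r s by auto
    then show "w \<in> conc (lang r) (conc {[a]} (lang s))"
      unfolding w by (intro concI) auto
  next
    fix w assume "w \<in> conc (lang r) (conc {[a]} (lang s))"
    then obtain u v where w: "w = u @ a # v" and "set u \<subseteq> A" "set v \<subseteq> A" "subseq p v"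
      unfolding r s conc_def by auto
    then have "subseq (a # p) w" by (simp add: list_emb_append2)
    then show "w \<in> {w. set w \<subseteq> A \<and> subseq (a # p) w}"
      using w \<open>set u \<subseteq> A\<close> \<open>set v \<subseteq> A\<close> Cons.prems by simp
  qed
  then show ?case
    using r s Cons.prems unfolding expressible_def
    by (intro exI[of _ "Times r (Times (Atom a) s)"]) simp
qed

lemma subseq_remdups: "subseq (remdups xs) xs"
  by (induction xs) auto

lemma expressible_set_eq:
  assumes "finite A"
  shows "expressible A {w. set w = A}"
proof -
  have "{w. set w = A} = (\<Union>p\<in>permutations_of_set A. {w. set w \<subseteq> A \<and> subseq p w})"
  proof (intro equalityI subsetI)
    fix w assume "w \<in> {w. set w = A}"
    then have "remdups w \<in> permutations_of_set A" "set w \<subseteq> A"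
      by (auto simp: permutations_of_set_def)
    then show "w \<in> (\<Union>p\<in>permutations_of_set A. {w. set w \<subseteq> A \<and> subseq p w})"
      using subseq_remdups[of w] by blast
  next
    fix w assume "w \<in> (\<Union>p\<in>permutations_of_set A. {w. set w \<subseteq> A \<and> subseq p w})"
    then obtain p where "set p = A" "set w \<subseteq> A" "subseq p w"
      by (auto simp: permutations_of_set_def)
    moreover have "set p \<subseteq> set w"
      using list_emb_set[OF \<open>subseq p w\<close>] by blast
    ultimately show "w \<in> {w. set w = A}" by simp
  qed
  moreover have "expressible A {w. set w \<subseteq> A \<and> subseq p w}" if "p \<in> permutations_of_set A" for p
    using expressible_supseqs[OF assms] permutations_of_setD(1)[OF that] by simp
  ultimately show ?thesis
    using assms by (simp add: expressible_Union)
qed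

lemma occ_pos_iff: "0 < occ w a \<longleftrightarrow> a \<in> set w"
  by (induction w) (auto simp: occ_def)

lemma Pn_eq: "Pn n = {w. set w = {1..n}}"
  by (auto simp: Pn_def Suc_le_eq occ_pos_iff)

section \<open>Shortest words\<close>

fun min_length :: "'a rexp \<Rightarrow> nat" where
  "min_length Eps = 0"
| "min_length (Atom a) = 1"
| "min_length (Plus r s) = min (min_length r) (min_length s)"
| "min_length (Times r s) = min_length r + min_length s"
| "min_length (Star r) = 0"

lemma min_length_le: "w \<in> lang r \<Longrightarrow> min_length r \<le> length w"
  by (induction r arbitrary: w) (fastforce simp: conc_def)+

lemma min_length_attained: "\<exists>w\<in>lang r. length w = min_length r"
proof (induction r)
  case (Plus r s)
  then show ?case by (auto simp: min_def)
next
  case (Times r s)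
  then obtain u v where "u \<in> lang r" "length u = min_length r" "v \<in> lang s" "length v = min_length s"
    by blast
  then show ?case by (auto intro!: bexI[of _ "u @ v"] concI)
qed (auto intro: star.star_Nil)

definition shortest_words :: "'a rexp \<Rightarrow> 'a list set" where
  "shortest_words r = {w \<in> lang r. length w = min_length r}"

lemma shortest_words_nonempty: "shortest_words r \<noteq> {}"
  using min_length_attained[of r] unfolding shortest_words_def by auto

lemma shortest_words_Plus_cases:
  "shortest_words (Plus r s) = shortest_words r \<or> shortest_words (Plus r s) = shortest_words s \<or>
   shortest_words (Plus r s) = shortest_words r \<union> shortest_words s"
proof (cases "min_length r" "min_length s" rule: linorder_cases)
  case less
  then have "shortest_words (Plus r s) = shortest_words r"
    using min_length_le[of _ s] by (force simp: shortest_words_def)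
  then show ?thesis ..
next
  case equal
  then have "shortest_words (Plus r s) = shortest_words r \<union> shortest_words s"
    by (auto simp: shortest_words_def)
  then show ?thesis by blast
next
  case greater
  then have "shortest_words (Plus r s) = shortest_words s"
    using min_length_le[of _ r] by (force simp: shortest_words_def)
  then show ?thesis by blast
qed

lemma shortest_words_Times: "shortest_words (Times r s) = conc (shortest_words r) (shortest_words s)"
proof
  show "shortest_words (Times r s) \<subseteq> conc (shortest_words r) (shortest_words s)"
  proof
    fix w assume "w \<in> shortest_words (Times r s)"
    then obtain u v where "w = u @ v" "u \<in> lang r" "v \<in> lang s"
      and "length u + length v = min_length r + min_length s"
      by (auto simp: shortest_words_def conc_def)
    moreover have "min_length r \<le> length u" "min_length s \<le> length v"
      using calculation min_length_le by blast+
    ultimately show "w \<in> conc (shortest_words r) (shortest_words s)"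
      by (auto simp: shortest_words_def intro: concI)
  qed
qed (auto simp: shortest_words_def conc_def)

lemma shortest_words_Star: "shortest_words (Star r) = {[]}"
  by (auto simp: shortest_words_def intro: star.star_Nil)

lemma shortest_words_lang_set_eq:
  assumes "finite A" "lang r = {w. set w = A}"
  shows "shortest_words r = permutations_of_set A"
proof -
  obtain p where p: "p \<in> permutations_of_set A"
    using assms(1) permutations_of_set_empty_iff by blast
  have "card A \<le> length w" if "w \<in> lang r" for w
    using that assms(2) card_length[of w] by simp
  moreover have "min_length r \<le> card A"
    using min_length_le[of p r] p assms(2) by (simp add: length_finite_permutations_of_set permutations_of_set_def)
  ultimately have "min_length r = card A"
    using min_length_attained[of r] by (metis le_antisym)
  then have "shortest_words r = {w. set w = A \<and> length w = card A}"
    using assms(2) by (auto simp: shortest_words_def)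
  also have "\<dots> = permutations_of_set A"
    by (auto simp: permutations_of_set_def distinct_card intro: card_distinct)
  finally show ?thesis .
qed

lemma conc_subset_permutations_of_setE:
  assumes "conc X Y \<subseteq> permutations_of_set A" "X \<noteq> {}" "Y \<noteq> {}"
  obtains B where "B \<subseteq> A" "X \<subseteq> permutations_of_set B" "Y \<subseteq> permutations_of_set (A - B)"
proof -
  obtain u0 v0 where "u0 \<in> X" "v0 \<in> Y" using assms(2,3) by blast
  have uv: "set u = A - set v" "set v = A - set u" "distinct u" "distinct v"
    if "u \<in> X" "v \<in> Y" for u v
    using permutations_of_setD[OF subsetD[OF assms(1) concI[OF that]]] by auto
  have "X \<subseteq> permutations_of_set (set u0)"
  proof
    fix u assume "u \<in> X"
    have "set u = set u0"
      using uv(1)[OF \<open>u \<in> X\<close> \<open>v0 \<in> Y\<close>] uv(1)[OF \<open>u0 \<in> X\<close> \<open>v0 \<in> Y\<close>] by simp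
    then show "u \<in> permutations_of_set (set u0)"
      using uv(3)[OF \<open>u \<in> X\<close> \<open>v0 \<in> Y\<close>] by blast
  qed
  moreover have "Y \<subseteq> permutations_of_set (A - set u0)"
    using uv \<open>u0 \<in> X\<close> by (auto intro!: permutations_of_setI)
  moreover have "set u0 \<subseteq> A"
    using uv \<open>u0 \<in> X\<close> \<open>v0 \<in> Y\<close> by blast
  ultimately show ?thesis using that by blast
qed

lemma card_le_fact_if_subset_permutations_of_set:
  assumes "X \<subseteq> permutations_of_set A" "finite A"
  shows "card X \<le> fact (card A)"
  using card_mono[OF _ assms(1)] assms(2) by simp

locale binomial_subadditive =
  fixes g :: "nat \<Rightarrow> real"
  assumes nonneg: "0 \<le> g l"
    and at_0: "g 0 \<le> 1"
    and at_1: "g 1 \<le> 1"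
    and split: "k \<le> l \<Longrightarrow> g l \<le> (l choose k) * (g k + g (l - k) + 1)"
begin

definition rsize_bound :: "'a rexp \<Rightarrow> bool" where
  "rsize_bound r \<longleftrightarrow> (\<forall>A. shortest_words r \<subseteq> permutations_of_set A \<longrightarrow>
     real (card (shortest_words r)) * g (card A) \<le> fact (card A) * real (rsize r))"

lemma rsize_bound_Plus:
  assumes "rsize_bound r" "rsize_bound s"
  shows "rsize_bound (Plus r s)"
  unfolding rsize_bound_def
proof (intro allI impI)
  fix A :: "'a set"
  let ?R = "shortest_words r" and ?S = "shortest_words s"
  let ?bound = "\<lambda>X t. real (card X) * g (card A) \<le> fact (card A) * real (rsize t)"
  assume sub: "shortest_words (Plus r s) \<subseteq> permutations_of_set A"
  have "rsize r \<le> rsize (Plus r s)" "rsize s \<le> rsize (Plus r s)"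
    by simp_all
  then have mono: "?bound X (Plus r s)" if "?bound X t" "t \<in> {r, s}" for X t
    using that order_trans[OF _ mult_left_mono[of "real (rsize t)" "real (rsize (Plus r s))"]] by auto
  consider "shortest_words (Plus r s) = ?R" | "shortest_words (Plus r s) = ?S"
    | "shortest_words (Plus r s) = ?R \<union> ?S"
    using shortest_words_Plus_cases by blast
  then show "?bound (shortest_words (Plus r s)) (Plus r s)"
  proof cases
    case 1
    then show ?thesis using assms(1) sub mono[of ?R r] by (simp add: rsize_bound_def)
  next
    case 2
    then show ?thesis using assms(2) sub mono[of ?S s] by (simp add: rsize_bound_def)
  next
    case 3
    then have "?bound ?R r" "?bound ?S s"
      using assms sub by (auto simp: rsize_bound_def)
    moreover have "real (card (?R \<union> ?S)) * g (card A) \<le> card ?R * g (card A) + card ?S * g (card A)"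
      using card_Un_le[of ?R ?S] nonneg by (metis distrib_right mult_right_mono of_nat_add of_nat_le_iff)
    ultimately have "real (card (?R \<union> ?S)) * g (card A) \<le> fact (card A) * (real (rsize r) + real (rsize s))"
      by (simp add: distrib_left)
    also have "\<dots> \<le> fact (card A) * real (rsize (Plus r s))"
      by (intro mult_left_mono) auto
    finally show ?thesis using 3 by simp
  qed
qed

lemma weight_split_le:
  assumes "k \<le> l" "0 \<le> a" "a \<le> fact k" "0 \<le> b" "b \<le> fact (l - k)"
    and x: "a * g k \<le> fact k * x" and y: "b * g (l - k) \<le> fact (l - k) * y"
  shows "a * b * g l \<le> fact l * (x + y + 1)"
proof -
  have fact_l: "(fact l :: real) = fact k * fact (l - k) * (l choose k)"
    using binomial_fact_lemma[OF \<open>k \<le> l\<close>] by (metis of_nat_fact of_nat_mult)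
  have "a * b * g l \<le> a * b * ((l choose k) * (g k + g (l - k) + 1))"
    using split[OF \<open>k \<le> l\<close>] assms(2,4) by (simp add: mult_left_mono)
  also have "\<dots> = (l choose k) * ((a * g k) * b + (b * g (l - k)) * a + a * b)"
    by (simp add: algebra_simps)
  also have "\<dots> \<le> (l choose k) * ((fact k * x) * fact (l - k) + (fact (l - k) * y) * fact k + fact k * fact (l - k))"
    using assms order_trans[OF mult_nonneg_nonneg x] order_trans[OF mult_nonneg_nonneg y] nonneg
    by (intro mult_left_mono add_mono mult_mono[OF x] mult_mono[OF y] mult_mono) auto
  also have "\<dots> = fact l * (x + y + 1)"
    unfolding fact_l by (simp add: algebra_simps)
  finally show ?thesis .
qed

lemma rsize_bound_Times:
  assumes "rsize_bound r" "rsize_bound s"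
  shows "rsize_bound (Times r s)"
  unfolding rsize_bound_def
proof (intro allI impI)
  fix A :: "'a set"
  let ?R = "shortest_words r" and ?S = "shortest_words s"
  assume "shortest_words (Times r s) \<subseteq> permutations_of_set A"
  then have RS: "conc ?R ?S \<subseteq> permutations_of_set A"
    by (simp add: shortest_words_Times)
  then obtain B where "B \<subseteq> A" and R: "?R \<subseteq> permutations_of_set B"
    and S: "?S \<subseteq> permutations_of_set (A - B)"
    using conc_subset_permutations_of_setE shortest_words_nonempty by metis
  have "finite A"
    using RS shortest_words_nonempty[of "Times r s"] unfolding shortest_words_Times
    by (metis permutations_of_set_empty_iff subset_empty)
  then have "finite B" "card B \<le> card A" and card_diff: "card (A - B) = card A - card B"
    using \<open>B \<subseteq> A\<close> by (auto simp: card_mono card_Diff_subset finite_subset)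
  have a: "real (card ?R) \<le> fact (card B)"
    using card_le_fact_if_subset_permutations_of_set[OF R \<open>finite B\<close>] by (metis of_nat_fact of_nat_le_iff)
  have b: "real (card ?S) \<le> fact (card A - card B)"
    using card_le_fact_if_subset_permutations_of_set[OF S] \<open>finite A\<close> card_diff
    by (metis finite_Diff of_nat_fact of_nat_le_iff)
  have x: "real (card ?R) * g (card B) \<le> fact (card B) * real (rsize r)"
    using assms(1) R unfolding rsize_bound_def by blast
  have y: "real (card ?S) * g (card A - card B) \<le> fact (card A - card B) * real (rsize s)"
    using assms(2) S card_diff unfolding rsize_bound_def by metis
  have "real (card (conc ?R ?S)) \<le> real (card ?R) * real (card ?S)"
    using card_conc_le R S finite_subset by (metis finite_permutations_of_set of_nat_le_iff of_nat_mult)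
  then have "real (card (conc ?R ?S)) * g (card A) \<le> real (card ?R) * real (card ?S) * g (card A)"
    using nonneg mult_right_mono by blast
  also have "\<dots> \<le> fact (card A) * (real (rsize r) + real (rsize s) + 1)"
    using weight_split_le[OF \<open>card B \<le> card A\<close> _ a _ b x y] by simp
  finally show "real (card (shortest_words (Times r s))) * g (card A)
      \<le> fact (card A) * real (rsize (Times r s))"
    by (simp add: shortest_words_Times add_ac)
qed

lemma rsize_bound: "rsize_bound r"
proof (induction r)
  case Eps
  have "shortest_words Eps = {[]}" by (auto simp: shortest_words_def)
  then show ?case using at_0 by (auto simp: rsize_bound_def permutations_of_set_def)
next
  case (Atom a)
  have "shortest_words (Atom a) = {[a]}" by (auto simp: shortest_words_def)
  then show ?case using at_1 by (auto simp: rsize_bound_def permutations_of_set_def)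
next
  case (Star r)
  then show ?case using at_0 by (auto simp: rsize_bound_def shortest_words_Star permutations_of_set_def)
qed (simp_all add: rsize_bound_Plus rsize_bound_Times)

lemma le_rpn_set_eq:
  assumes "finite A"
  shows "g (card A) \<le> rpn A {w. set w = A}"
proof -
  obtain r where r: "lang r = {w. set w = A}" "rsize r = rpn A {w. set w = A}"
    using rpn_attained[OF expressible_set_eq[OF assms]] by metis
  have "shortest_words r = permutations_of_set A"
    using shortest_words_lang_set_eq[OF assms r(1)] .
  then have "fact (card A) * g (card A) \<le> fact (card A) * real (rsize r)"
    using rsize_bound[of r] assms by (simp add: rsize_bound_def mult.commute)
  then show ?thesis
    using r(2) by simp
qed

end

section \<open>Binomial estimates\<close>

definition quasipoly :: "real \<Rightarrow> real" where
  "quasipoly x = x powr ((3 + log 2 x) / 4)"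

lemma powr_neg_eq_inverse_quasipoly: "x powr (- (3 + log 2 x) / 4) = inverse (quasipoly x)"
proof -
  have "- (3 + log 2 x) / 4 = - ((3 + log 2 x) / 4)"
    by (rule minus_divide_left[symmetric])
  then show ?thesis
    unfolding quasipoly_def by (simp only: powr_minus)
qed

lemma quasipoly_ge_1: "1 \<le> x \<Longrightarrow> 1 \<le> quasipoly x"
  unfolding quasipoly_def by (intro ge_one_powr_ge_zero) auto

lemma quasipoly_mono:
  assumes "1 \<le> x" "x \<le> y"
  shows "quasipoly x \<le> quasipoly y"
proof -
  have "x powr ((3 + log 2 x) / 4) \<le> y powr ((3 + log 2 x) / 4)"
    using assms by (intro powr_mono2) auto
  also have "\<dots> \<le> y powr ((3 + log 2 y) / 4)"
    using assms by (intro powr_mono) auto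
  finally show ?thesis unfolding quasipoly_def .
qed

lemma quasipoly_double:
  assumes "1 \<le> x"
  shows "quasipoly (2 * x) = 2 * sqrt x * quasipoly x"
proof -
  have "quasipoly (2 * x) = 2 powr ((4 + log 2 x) / 4) * x powr ((4 + log 2 x) / 4)"
    using assms by (simp add: quasipoly_def log_mult powr_mult add_ac)
  also have "2 powr ((4 + log 2 x) / 4) = 2 * (2 powr log 2 x) powr (1 / 4)"
    by (simp add: add_divide_distrib powr_add powr_powr)
  also have "2 powr log 2 x = x"
    using assms by simp
  also have "x powr ((4 + log 2 x) / 4) = x powr (1 / 4) * quasipoly x"
    by (simp add: quasipoly_def powr_add[symmetric] add_divide_distrib[symmetric])
  also have "2 * x powr (1 / 4) * (x powr (1 / 4) * quasipoly x) = 2 * sqrt x * quasipoly x"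
    using assms by (simp add: powr_add[symmetric] sqrt_def root_powr_inverse)
  finally show ?thesis .
qed

lemma central_binomial_Suc: "(2 * m + 2) choose (m + 1) = 2 * ((2 * m + 1) choose m)"
proof -
  have "(2 * m + 1) choose (m + 1) = (2 * m + 1) choose m"
    using central_binomial_odd[of "2 * m + 1"] by (simp del: binomial_Suc_Suc)
  then show ?thesis
    using binomial_Suc_Suc[of "2 * m + 1" m] by (simp del: binomial_Suc_Suc)
qed

lemma Suc_times_central_binomial_Suc:
  "(m + 1) * ((2 * m + 2) choose (m + 1)) = 2 * (2 * m + 1) * ((2 * m) choose m)"
proof -
  have "(m + 1) * ((2 * m + 1) choose (m + 1)) = (2 * m + 1) * ((2 * m) choose m)"
    using Suc_times_binomial[of m "2 * m"] by (simp del: binomial_Suc_Suc)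
  moreover have "(2 * m + 1) choose (m + 1) = (2 * m + 1) choose m"
    using central_binomial_odd[of "2 * m + 1"] by (simp del: binomial_Suc_Suc)
  ultimately show ?thesis
    unfolding central_binomial_Suc by (simp del: binomial_Suc_Suc)
qed

lemma central_binomial_square_lower: "1 \<le> m \<Longrightarrow> 16 ^ m \<le> 4 * m * ((2 * m) choose m)\<^sup>2"
proof (induction m rule: nat_induct_at_least)
  case base
  then show ?case by (simp add: numeral_2_eq_2)
next
  case (Suc m)
  define C C' where "C = (2 * m) choose m" and "C' = (2 * m + 2) choose (m + 1)"
  have "16 ^ (m + 1) \<le> 16 * (4 * m * C\<^sup>2)"
    using Suc.IH unfolding C_def by simp
  then have "(m + 1) * 16 ^ (m + 1) \<le> (m + 1) * (16 * (4 * m * C\<^sup>2))"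
    by (rule mult_left_mono) simp
  also have "\<dots> = 16 * (4 * m * (m + 1)) * C\<^sup>2"
    by (simp add: algebra_simps)
  also have "\<dots> \<le> 16 * (2 * m + 1)\<^sup>2 * C\<^sup>2"
    by (intro mult_right_mono mult_left_mono) (auto simp: power2_eq_square algebra_simps)
  also have "\<dots> = 4 * (2 * (2 * m + 1) * C)\<^sup>2"
    by (simp add: power2_eq_square algebra_simps)
  also have "2 * (2 * m + 1) * C = (m + 1) * C'"
    unfolding C_def C'_def by (rule Suc_times_central_binomial_Suc[symmetric])
  also have "4 * ((m + 1) * C')\<^sup>2 = (m + 1) * (4 * (m + 1) * C'\<^sup>2)"
    by (simp add: power2_eq_square algebra_simps)
  finally have "16 ^ (m + 1) \<le> 4 * (m + 1) * C'\<^sup>2"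
    by (metis Suc_eq_plus1 Suc_mult_le_cancel1)
  then show ?case
    unfolding C'_def by (simp add: algebra_simps del: binomial_Suc_Suc)
qed

lemma central_binomial_lower_sqrt:
  assumes "1 \<le> m"
  shows "(4::real) ^ m \<le> 2 * sqrt m * ((2 * m) choose m)"
proof (rule power2_le_imp_le)
  have "((4::real) ^ m)\<^sup>2 = 16 ^ m"
    by (simp add: power2_eq_square power_mult_distrib[symmetric])
  also have "\<dots> = real (16 ^ m)"
    by simp
  also have "\<dots> \<le> real (4 * m * ((2 * m) choose m)\<^sup>2)"
    using central_binomial_square_lower[OF assms] by (simp only: of_nat_le_iff)
  also have "\<dots> = (2 * sqrt m * ((2 * m) choose m))\<^sup>2"
    by (simp add: power_mult_distrib)
  finally show "((4::real) ^ m)\<^sup>2 \<le> (2 * sqrt m * ((2 * m) choose m))\<^sup>2" .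
qed simp

lemma eventually_quasipoly_Suc_le:
  "eventually (\<lambda>n::nat. quasipoly (real n + 1) \<le> 4/3 * quasipoly (real n)) at_top"
  unfolding quasipoly_def by real_asymp

lemma four_pow_quasipoly_le_central_binomial:
  assumes "1 \<le> m"
  shows "4 ^ m * quasipoly (real m) \<le> ((2 * m) choose m) * quasipoly (real (2 * m))"
proof -
  have "4 ^ m * quasipoly (real m) \<le> 2 * sqrt m * ((2 * m) choose m) * quasipoly (real m)"
    using central_binomial_lower_sqrt[OF assms] quasipoly_ge_1[of m] assms
    by (intro mult_right_mono) auto
  also have "\<dots> = ((2 * m) choose m) * quasipoly (real (2 * m))"
    using quasipoly_double[of m] assms by simp
  finally show ?thesis .
qed

lemma four_pow_quasipoly_le_binomial_half:
  assumes "2 \<le> n" "quasipoly (real n + 1) \<le> 4/3 * quasipoly (real n)"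
  shows "4 ^ (n div 2) * quasipoly (real (n - n div 2)) \<le> (n choose (n div 2)) * quasipoly (real n)"
proof (cases "even n")
  case True
  then obtain m where "n = 2 * m" by blast
  then show ?thesis
    using four_pow_quasipoly_le_central_binomial[of m] assms(1) by simp
next
  case False
  then obtain m where n: "n = 2 * m + 1" using oddE by blast
  have "4 * (4 ^ m * quasipoly (real (m + 1)))
      \<le> ((2 * (m + 1)) choose (m + 1)) * quasipoly (real (2 * (m + 1)))"
    using four_pow_quasipoly_le_central_binomial[of "m + 1"] by simp
  also have "\<dots> = 2 * ((2 * m + 1) choose m) * quasipoly (real n + 1)"
    using central_binomial_Suc[of m] n by (simp add: algebra_simps del: binomial_Suc_Suc)
  also have "\<dots> \<le> 2 * ((2 * m + 1) choose m) * (4/3 * quasipoly (real n))"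
    using assms(2) by (intro mult_left_mono) auto
  finally have "4 ^ m * quasipoly (real (m + 1)) \<le> 2/3 * (((2 * m + 1) choose m) * quasipoly (real n))"
    by (simp add: algebra_simps)
  moreover have "0 \<le> ((2 * m + 1) choose m) * quasipoly (real n)"
    using quasipoly_ge_1[of n] assms(1) by simp
  ultimately have "4 ^ m * quasipoly (real (m + 1)) \<le> ((2 * m + 1) choose m) * quasipoly (real n)"
    by linarith
  then show ?thesis
    using n by (simp del: binomial_Suc_Suc)
qed

lemma four_pow_quasipoly_le_binomial_step:
  assumes "k < n" "n \<le> 4 * k + 3"
    and "quasipoly (real (n - Suc k) + 1) \<le> 4/3 * quasipoly (real (n - Suc k))"
    and "4 ^ Suc k * quasipoly (real (n - Suc k)) \<le> (n choose Suc k) * quasipoly (real n)"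
  shows "4 ^ k * quasipoly (real (n - k)) \<le> (n choose k) * quasipoly (real n)"
proof -
  have ratio: "real (Suc k) * (n choose Suc k) = real (n - k) * (n choose k)"
    using binomial_absorption[of k n] binomial_absorb_comp[of n k] by (metis of_nat_mult)
  have "real (n - Suc k) + 1 = real (n - k)"
    using assms(1) by simp
  then have "real (n - k) * (4 ^ k * quasipoly (real (n - k)))
      \<le> real (n - k) * (4 ^ k * (4/3 * quasipoly (real (n - Suc k))))"
    using assms(3) by (intro mult_left_mono) auto
  also have "\<dots> = real (n - k) / 3 * (4 ^ Suc k * quasipoly (real (n - Suc k)))"
    by simp
  also have "\<dots> \<le> real (n - k) / 3 * ((n choose Suc k) * quasipoly (real n))"
    using assms(4) by (intro mult_left_mono) auto
  also have "\<dots> \<le> real (Suc k) * ((n choose Suc k) * quasipoly (real n))"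
    using assms(1,2) quasipoly_ge_1[of n] by (intro mult_right_mono) auto
  also have "\<dots> = real (n - k) * ((n choose k) * quasipoly (real n))"
    using ratio by simp
  finally show ?thesis
    using assms(1) by (simp add: mult_le_cancel_left)
qed

lemma four_pow_quasipoly_le_binomial_small:
  assumes "1 \<le> k" "4 * k \<le> n"
  shows "4 ^ k * quasipoly (real (n - k)) \<le> (n choose k) * quasipoly (real n)"
proof (rule mult_mono)
  have "(4::real) ^ k \<le> (real n / real k) ^ k"
    using assms by (intro power_mono) (auto simp: field_simps)
  also have "\<dots> \<le> n choose k"
    using assms by (intro binomial_ge_n_over_k_pow_k) auto
  finally show "(4::real) ^ k \<le> n choose k" .
  show "quasipoly (real (n - k)) \<le> quasipoly (real n)"
    using assms by (intro quasipoly_mono) auto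
  show "0 \<le> quasipoly (real (n - k))"
    using assms quasipoly_ge_1[of "real (n - k)"] by auto
qed simp

lemma eventually_four_pow_quasipoly_le_binomial:
  "eventually (\<lambda>n. \<forall>k. 1 \<le> k \<longrightarrow> k \<le> n div 2 \<longrightarrow>
     4 ^ k * quasipoly (real (n - k)) \<le> (n choose k) * quasipoly (real n)) at_top"
proof -
  obtain J where J: "\<And>j. J \<le> j \<Longrightarrow> quasipoly (real j + 1) \<le> 4/3 * quasipoly (real j)"
    using eventually_quasipoly_Suc_le unfolding eventually_at_top_linorder by blast
  have "4 ^ k * quasipoly (real (n - k)) \<le> (n choose k) * quasipoly (real n)"
    if n: "2 * J + 4 \<le> n" and k: "1 \<le> k" "k \<le> n div 2" for n k
  proof (cases "4 * k \<le> n")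
    case True
    then show ?thesis using four_pow_quasipoly_le_binomial_small k by blast
  next
    case False
    show ?thesis
      using k(2)
    proof (induction k rule: inc_induct)
      case base
      show ?case using four_pow_quasipoly_le_binomial_half[of n] J[of n] n by simp
    next
      case (step i)
      show ?case
        using four_pow_quasipoly_le_binomial_step[of i n] J[of "n - Suc i"] step False n
        by simp
    qed
  qed
  then show ?thesis
    unfolding eventually_at_top_linorder by (intro exI[of _ "2 * J + 4"]) auto
qed

lemma binomial_subadditiveI:
  fixes g :: "nat \<Rightarrow> real"
  assumes "1 \<le> N"
    and nonneg: "\<And>l. 0 \<le> g l"
    and small: "\<And>l. l \<le> N \<Longrightarrow> g l \<le> 1"
    and half: "\<And>l k. N \<le> l \<Longrightarrow> 1 \<le> k \<Longrightarrow> k \<le> l div 2 \<Longrightarrow>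
      g l \<le> (l choose k) * g (l - k)"
  shows "binomial_subadditive g"
proof (rule binomial_subadditive.intro)
  show "0 \<le> g l" for l
    by (rule nonneg)
  show "g 0 \<le> 1" "g 1 \<le> 1"
    using small assms(1) by auto
  fix k l :: nat
  assume "k \<le> l"
  consider "k = 0 \<or> k = l" | "0 < k" "k < l" "l < N" | "0 < k" "k < l" "N \<le> l"
    using \<open>k \<le> l\<close> by linarith
  then show "g l \<le> (l choose k) * (g k + g (l - k) + 1)"
  proof cases
    case 1
    then show ?thesis using nonneg by auto
  next
    case 2
    have "g l \<le> 1 * 1"
      using small 2 by simp
    also have "\<dots> \<le> (l choose k) * (g k + g (l - k) + 1)"
      using \<open>k \<le> l\<close> nonneg[of k] nonneg[of "l - k"]
      by (intro mult_mono) (auto simp: Suc_leI)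
    finally show ?thesis .
  next
    case 3
    define k' where "k' = min k (l - k)"
    have "(l choose k') = (l choose k)" "g (l - k') \<le> g k + g (l - k) + 1"
      using \<open>k \<le> l\<close> nonneg[of k] nonneg[of "l - k"]
      by (auto simp: k'_def min_def binomial_symmetric[symmetric])
    moreover have "g l \<le> (l choose k') * g (l - k')"
      using half 3 by (auto simp: k'_def)
    ultimately show ?thesis
      by (metis mult_left_mono of_nat_0_le_iff order_trans)
  qed
qed

lemma binomial_subadditive_four_pow_div_quasipoly:
  assumes "1 \<le> N"
    and key: "\<And>n k. N \<le> n \<Longrightarrow> 1 \<le> k \<Longrightarrow> k \<le> n div 2 \<Longrightarrow>
      4 ^ k * quasipoly (real (n - k)) \<le> (n choose k) * quasipoly (real n)"
  shows "binomial_subadditive (\<lambda>l. 4 ^ l / (4 ^ N * quasipoly (real l)))"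
proof (rule binomial_subadditiveI[OF assms(1)])
  have Q_pos: "0 < quasipoly (real l)" if "1 \<le> l" for l
    using quasipoly_ge_1[of l] that by simp
  show "0 \<le> 4 ^ l / (4 ^ N * quasipoly (real l))" for l
    unfolding quasipoly_def by simp
  show "4 ^ l / (4 ^ N * quasipoly (real l)) \<le> 1" if "l \<le> N" for l
  proof (cases "l = 0")
    case False
    then have "4 ^ l \<le> (4 ^ N :: real) * 1" "1 \<le> quasipoly (real l)"
      using that quasipoly_ge_1[of l] by (auto intro: power_increasing)
    then have "4 ^ l \<le> (4 ^ N :: real) * quasipoly (real l)"
      by (meson dual_order.trans mult_left_mono zero_le_power zero_le_numeral)
    then show ?thesis
      using Q_pos[of l] False by (simp add: pos_divide_le_eq)
  qed (simp add: quasipoly_def) \<comment> \<open>\<open>quasipoly 0 = 0\<close>, so the quotient is \<open>0\<close> by division by zero\<close>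
  show "4 ^ l / (4 ^ N * quasipoly (real l))
      \<le> (l choose k) * (4 ^ (l - k) / (4 ^ N * quasipoly (real (l - k))))"
    if "N \<le> l" "1 \<le> k" "k \<le> l div 2" for l k
  proof -
    have "4 ^ l * quasipoly (real (l - k)) = 4 ^ (l - k) * (4 ^ k * quasipoly (real (l - k)))"
      using that by (simp add: power_add[symmetric])
    also have "\<dots> \<le> 4 ^ (l - k) * ((l choose k) * quasipoly (real l))"
      using key[OF that] by (intro mult_left_mono) auto
    finally show ?thesis
      using Q_pos[of l] Q_pos[of "l - k"] that by (simp add: field_simps)
  qed
qed

theorem corollary8p6:
  shows "\<exists>c > 0. \<exists>N. \<forall>n \<ge> N.
     real (rpn {1..n} (Pn n)) \<ge> c * 4 ^ n * real n powr (- (3 + log 2 (real n)) / 4)"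
proof -
  obtain N where key: "\<And>n k. N \<le> n \<Longrightarrow> 1 \<le> k \<Longrightarrow> k \<le> n div 2 \<Longrightarrow>
      4 ^ k * quasipoly (real (n - k)) \<le> (n choose k) * quasipoly (real n)"
    using eventually_four_pow_quasipoly_le_binomial unfolding eventually_at_top_linorder by blast
  interpret binomial_subadditive "\<lambda>l. 4 ^ l / (4 ^ Suc N * quasipoly (real l))"
    by (rule binomial_subadditive_four_pow_div_quasipoly) (use key in auto)
  have "c * 4 ^ n * real n powr (- (3 + log 2 (real n)) / 4) \<le> rpn {1..n} (Pn n)"
    if "c = 1 / 4 ^ Suc N" for c n
  proof -
    have "c * 4 ^ n * real n powr (- (3 + log 2 (real n)) / 4) = 4 ^ n / (4 ^ Suc N * quasipoly (real n))"
      unfolding that powr_neg_eq_inverse_quasipoly by (simp add: field_simps)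
    also have "\<dots> \<le> rpn {1..n} {w. set w = {1..n}}"
      using le_rpn_set_eq[of "{1..n}"] by simp
    finally show ?thesis
      by (simp only: Pn_eq)
  qed
  then show ?thesis
    by (intro exI[of _ "1 / 4 ^ Suc N"]) auto
qed

end
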